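(* Let $m,n,p,q\in\mathbb{R}$ with $m<0$, and let $P(t)=t^5+mt^3+nt^2+pt+q$. Set $u=\frac{2\sqrt{-m}}{\sqrt5}$, $\alpha=\frac{16n}{u^3}$, $\beta=\frac{16p}{u^4}-5$, $\gamma=\frac{16q}{u^5}$, and $f(\theta)=\alpha\cos^2\theta+\beta\cos\theta+\cos 5\theta+\gamma$. Then the map $\theta\mapsto u\cos\theta$ restricts to a bijection from the set of zeros of $f$ in $[0,\pi]$ onto the set of roots of $P$ in $[-u,u]$. Explicitly, $\theta_0\in[0,\pi]$ satisfies $f(\theta_0)=0$ if and only if $t_0=u\cos\theta_0$ is a root of $P$. *)

theory Defs
  imports Complex_Main
begin

end

theory Submission
  imports Defs
begin

text \<open>
  The substitution \<open>t = u cos \<theta>\<close> with \<open>u\<^sup>2 = -4m/5\<close> is chosen so that the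
  terms \<open>t\<^sup>5 + m t\<^sup>3\<close> of the depressed quintic become, up to the factor \<open>u\<^sup>5/16\<close>,
  the Chebyshev polynomial \<open>cos 5\<theta> = 16 cos\<^sup>5 \<theta> - 20 cos\<^sup>3 \<theta> + 5 cos \<theta>\<close> plus a
  linear correction in \<open>cos \<theta>\<close>. Hence \<open>P (u cos \<theta>) = (u\<^sup>5/16) f \<theta>\<close>, and since \<open>cos\<close>
  maps \<open>[0, \<pi>]\<close> bijectively onto \<open>[-1, 1]\<close> with inverse \<open>arccos\<close>, the zeros
  correspond.
\<close>

lemma cos_quintuple: "cos (5 * x) = 16 * cos x ^ 5 - 20 * cos x ^ 3 + 5 * cos (x::real)"
proof -
  have "cos (5 * x) = cos (4 * x) * cos x - sin (4 * x) * sin x"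
    using cos_add[of "4 * x" x] by simp
  also have "\<dots> = (2 * (2 * cos x ^ 2 - 1) ^ 2 - 1) * cos x
      - 4 * sin x ^ 2 * cos x * (2 * cos x ^ 2 - 1)"
    using cos_double_cos[of "2 * x"] sin_double[of "2 * x"] cos_double_cos[of x] sin_double[of x]
    by (simp add: power2_eq_square)
  also have "\<dots> = 16 * cos x ^ 5 - 20 * cos x ^ 3 + 5 * cos x"
    unfolding sin_squared_eq by (simp add: algebra_simps power2_eq_square power3_eq_cube
        numeral_eq_Suc)
  finally show ?thesis .
qed

lemma quintic_at_scaled_cos:
  fixes u m n p q \<theta> :: real
  assumes "u \<noteq> 0" and "m = - 5 * u^2 / 4"
  shows "(u * cos \<theta>)^5 + m * (u * cos \<theta>)^3 + n * (u * cos \<theta>)^2 + p * (u * cos \<theta>) + q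
    = u^5 / 16 * (16 * n / u^3 * (cos \<theta>)^2 + (16 * p / u^4 - 5) * cos \<theta> + cos (5 * \<theta>)
        + 16 * q / u^5)"
  unfolding cos_quintuple assms(2) using assms(1)
  by (simp add: field_simps power_eq_if)

lemma bij_betw_scaled_cos:
  fixes u :: real
  assumes "u > 0"
  shows "bij_betw (\<lambda>\<theta>. u * cos \<theta>) {\<theta>\<in>{0..pi}. Q (u * cos \<theta>)} {t\<in>{-u..u}. Q t}"
proof (rule bij_betw_byWitness[where f' = "\<lambda>t. arccos (t / u)"])
  have "\<bar>u * cos \<theta>\<bar> \<le> u" for \<theta>
    using assms by (simp add: abs_mult mult_left_le)
  then have cos_bounds: "- u \<le> u * cos \<theta> \<and> u * cos \<theta> \<le> u" for \<theta>
    by (meson abs_le_D1 abs_le_D2 minus_le_iff)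
  have scaled_bounds: "- 1 \<le> t / u \<and> t / u \<le> 1" if "t \<in> {-u..u}" for t
    using assms that by (simp add: divide_simps)
  show "\<forall>\<theta>\<in>{\<theta>\<in>{0..pi}. Q (u * cos \<theta>)}. arccos (u * cos \<theta> / u) = \<theta>"
    using assms by (auto simp: arccos_cos)
  show "\<forall>t\<in>{t\<in>{-u..u}. Q t}. u * cos (arccos (t / u)) = t"
    using assms scaled_bounds by auto
  show "(\<lambda>\<theta>. u * cos \<theta>) ` {\<theta>\<in>{0..pi}. Q (u * cos \<theta>)} \<subseteq> {t\<in>{-u..u}. Q t}"
    using cos_bounds by auto
  show "(\<lambda>t. arccos (t / u)) ` {t\<in>{-u..u}. Q t} \<subseteq> {\<theta>\<in>{0..pi}. Q (u * cos \<theta>)}"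
    using assms scaled_bounds arccos_lbound arccos_ubound by auto
qed

theorem corollary1:
  fixes m n p q :: real
  assumes "m < 0"
  defines "P \<equiv> (\<lambda>t::real. t^5 + m * t^3 + n * t^2 + p * t + q)"
    and "u \<equiv> 2 * sqrt (- m) / sqrt 5"
  defines "\<alpha> \<equiv> 16 * n / u^3"
    and "\<beta> \<equiv> 16 * p / u^4 - 5"
    and "\<gamma> \<equiv> 16 * q / u^5"
  defines "f \<equiv> (\<lambda>\<theta>::real. \<alpha> * (cos \<theta>)^2 + \<beta> * cos \<theta> + cos (5 * \<theta>) + \<gamma>)"
  shows "bij_betw (\<lambda>\<theta>. u * cos \<theta>) {\<theta>\<in>{0..pi}. f \<theta> = 0} {t\<in>{-u..u}. P t = 0}
         \<and> (\<forall>\<theta>0\<in>{0..pi}. f \<theta>0 = 0 \<longleftrightarrow> P (u * cos \<theta>0) = 0)"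
proof -
  have "u > 0"
    unfolding u_def using assms(1) by simp
  moreover have "m = - 5 * u^2 / 4"
    unfolding u_def using assms(1) by (simp add: power_divide power_mult_distrib)
  ultimately have "P (u * cos \<theta>) = u^5 / 16 * f \<theta>" for \<theta>
    unfolding P_def f_def \<alpha>_def \<beta>_def \<gamma>_def by (intro quintic_at_scaled_cos) auto
  with \<open>u > 0\<close> have zeros_correspond: "f \<theta> = 0 \<longleftrightarrow> P (u * cos \<theta>) = 0" for \<theta>
    by (metis mult_eq_0_iff divide_eq_0_iff zero_neq_numeral power_not_zero less_irrefl)
  then have "{\<theta>\<in>{0..pi}. f \<theta> = 0} = {\<theta>\<in>{0..pi}. P (u * cos \<theta>) = 0}"
    by simp
  with bij_betw_scaled_cos[OF \<open>u > 0\<close>, of "\<lambda>t. P t = 0"] zeros_correspond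
  show ?thesis by simp
qed

end
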